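(* Let $G=(V,E)$ be a finite connected graph with arc set $A$. (a) Let $w_1:A\to\mathbb{C}$ with $\sum_{e:\,o(e)=u}|w_1(e)|^2=1$ for all $u\in V$, and let $(U_1\psi)(e)=\sum_{f:\,t(f)=o(e)}\big(2w_1(e)\overline{w_1(\bar f)}-\delta_{e,\bar f}\big)\psi(f)$ on functions $\psi:A\to\mathbb{C}$. Let $T$ be the operator on functions on $V$ given by $(Tf)(u)=\sum_{e:\,o(e)=u}w_1(e)\overline{w_1(\bar e)}f(t(e))$, and $\varphi_1(x)=(x+x^{-1})/2$. For $s\in\{1,-1\}$ put $n_s=|E|-|V|+\mathbf{1}_{\{s\in\sigma(T)\}}$. Then $\sigma(U_1)=\varphi_1^{-1}(\sigma(T))\cup\{1:n_1>0\}\cup\{-1:n_{-1}>0\}$ (i.e., $1$ is added iff $n_1>0$ and $-1$ is added iff $n_{-1}>0$). (b) Let $w_2:A\to(0,\infty)$ with $\sum_{e:\,o(e)=u}w_2(e)=1$ for all $u\in V$, and suppose there is $m_V:V\to(0,\infty)$ with $m_V(o(e))w_2(e)=m_V(t(e))w_2(\bar e)$ for all $e\in A$. Let $(U_2\psi)(e)=\sum_{f:\,t(f)=o(e)}\big(2w_2(\bar f)-\delta_{e,\bar f}\big)\psi(f)$, let $(Lf)(u)=\sum_{e:\,o(e)=u}w_2(e)f(t(e))-f(u)$, and $\varphi_2(x)=(x+x^{-1})/2-1$. Then $\sigma(U_2)=\varphi_2^{-1}(\sigma(L))$ if $G$ is a tree; $\sigma(U_2)=\varphi_2^{-1}(\sigma(L))\cup\{1\}$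 if $G$ has exactly one cycle and is not bipartite; and $\sigma(U_2)=\varphi_2^{-1}(\sigma(L))\cup\{1,-1\}$ otherwise.
   Context: $A=\{(u,v):\{u,v\}\in E\}$; for $e=(u,v)$, $o(e)=u$, $t(e)=v$, $\bar e=(v,u)$. $\delta$ is the Kronecker delta, $\mathbf{1}$ an indicator, $\sigma(\cdot)$ the spectrum (set of eigenvalues), and for a function $\varphi$ and set $X$, $\varphi^{-1}(X)=\{x\in\mathbb{C}\setminus\{0\}:\varphi(x)\in X\}$. "Exactly one cycle" means $|E|=|V|$ for the connected graph $G$. *)

theory Defs
  imports "HOL-Analysis.Analysis"
begin

definition simple_graph :: "'a set \<Rightarrow> 'a set set \<Rightarrow> bool" where
  "simple_graph V E \<longleftrightarrow> finite V \<and> (\<forall>e\<in>E. e \<subseteq> V \<and> card e = 2)"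

definition adj :: "'a set set \<Rightarrow> 'a \<Rightarrow> 'a \<Rightarrow> bool" where
  "adj E u v \<longleftrightarrow> {u, v} \<in> E"

definition connected_graph :: "'a set \<Rightarrow> 'a set set \<Rightarrow> bool" where
  "connected_graph V E \<longleftrightarrow> V \<noteq> {} \<and> (\<forall>u\<in>V. \<forall>v\<in>V. (adj E)\<^sup>*\<^sup>* u v)"

definition arcs :: "'a set set \<Rightarrow> ('a \<times> 'a) set" where
  "arcs E = {(u, v). {u, v} \<in> E}"

definition rev_arc :: "'a \<times> 'a \<Rightarrow> 'a \<times> 'a" where
  "rev_arc e = (snd e, fst e)"

definition has_cycle :: "'a set set \<Rightarrow> bool" where
  "has_cycle E \<longleftrightarrow> (\<exists>vs. length vs \<ge> 3 \<and> distinct vs \<and>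
      (\<forall>i < length vs - 1. adj E (vs ! i) (vs ! Suc i)) \<and> adj E (last vs) (hd vs))"

definition is_tree :: "'a set \<Rightarrow> 'a set set \<Rightarrow> bool" where
  "is_tree V E \<longleftrightarrow> connected_graph V E \<and> \<not> has_cycle E"

definition bipartite :: "'a set \<Rightarrow> 'a set set \<Rightarrow> bool" where
  "bipartite V E \<longleftrightarrow> (\<exists>c :: 'a \<Rightarrow> bool. \<forall>u v. {u, v} \<in> E \<longrightarrow> c u \<noteq> c v)"

definition op_spectrum :: "'b set \<Rightarrow> (('b \<Rightarrow> complex) \<Rightarrow> 'b \<Rightarrow> complex) \<Rightarrow> complex set" where
  "op_spectrum S M = {c. \<exists>\<psi>. (\<forall>x. x \<notin> S \<longrightarrow> \<psi> x = 0) \<and> (\<exists>x\<in>S. \<psi> x \<noteq> 0) \<and>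
                               (\<forall>x\<in>S. M \<psi> x = c * \<psi> x)}"

definition preim :: "(complex \<Rightarrow> complex) \<Rightarrow> complex set \<Rightarrow> complex set" where
  "preim \<phi> X = {x. x \<noteq> 0 \<and> \<phi> x \<in> X}"

definition phi1 :: "complex \<Rightarrow> complex" where
  "phi1 x = (x + inverse x) / 2"

definition phi2 :: "complex \<Rightarrow> complex" where
  "phi2 x = (x + inverse x) / 2 - 1"

definition U1 :: "'a set set \<Rightarrow> ('a \<times> 'a \<Rightarrow> complex) \<Rightarrow> ('a \<times> 'a \<Rightarrow> complex) \<Rightarrow> 'a \<times> 'a \<Rightarrow> complex" where
  "U1 E w \<psi> e = (\<Sum>f\<in>{f\<in>arcs E. snd f = fst e}.
      (2 * w e * cnj (w (rev_arc f)) - (if e = rev_arc f then 1 else 0)) * \<psi> f)"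

definition T_op :: "'a set set \<Rightarrow> ('a \<times> 'a \<Rightarrow> complex) \<Rightarrow> ('a \<Rightarrow> complex) \<Rightarrow> 'a \<Rightarrow> complex" where
  "T_op E w f u = (\<Sum>e\<in>{e\<in>arcs E. fst e = u}. w e * cnj (w (rev_arc e)) * f (snd e))"

definition U2 :: "'a set set \<Rightarrow> ('a \<times> 'a \<Rightarrow> real) \<Rightarrow> ('a \<times> 'a \<Rightarrow> complex) \<Rightarrow> 'a \<times> 'a \<Rightarrow> complex" where
  "U2 E w \<psi> e = (\<Sum>f\<in>{f\<in>arcs E. snd f = fst e}.
      (2 * complex_of_real (w (rev_arc f)) - (if e = rev_arc f then 1 else 0)) * \<psi> f)"

definition L_op :: "'a set set \<Rightarrow> ('a \<times> 'a \<Rightarrow> real) \<Rightarrow> ('a \<Rightarrow> complex) \<Rightarrow> 'a \<Rightarrow> complex" where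
  "L_op E w f u = (\<Sum>e\<in>{e\<in>arcs E. fst e = u}. complex_of_real (w e) * f (snd e)) - f u"

end

theory Submission
  imports Defs "Jordan_Normal_Form.Determinant"
begin

text \<open>
  Both \<open>U1\<close> and \<open>U2\<close> are instances of one operator on functions on arcs,
  \<open>(U \<psi>)(e) = 2 a(e) \<Sum>\<^bsub>t(f) = o(e)\<^esub> b(f\<^sup>-) \<psi>(f) - \<psi>(e\<^sup>-)\<close>, with arc weights normalised by
  \<open>\<Sum>\<^bsub>o(g) = u\<^esub> b(g) a(g) = 1\<close>. On the vertex functions
  \<open>F \<psi> = \<Sum>\<^bsub>o(g) = u\<^esub> b(g) \<psi>(g)\<close> (\<open>outgoing\<close>) and \<open>G \<psi> = \<Sum>\<^bsub>t(f) = u\<^esub> b(f\<^sup>-) \<psi>(f)\<close>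
  (\<open>incoming\<close>) it acts by \<open>F (U \<psi>) = G \<psi>\<close> and \<open>G (U \<psi>) = 2 M (G \<psi>) - F \<psi>\<close>, where \<open>M\<close> is
  the vertex operator. So an eigenvector for \<open>l\<close> either has \<open>F \<psi> \<noteq> 0\<close>, an eigenfunction of \<open>M\<close>
  for \<open>(l + 1/l)/2\<close>, or \<open>F \<psi> = G \<psi> = 0\<close>, which forces \<open>\<psi>(e\<^sup>-) = -l \<psi>(e)\<close> and \<open>l = \<plusminus>1\<close>;
  conversely every eigenfunction of \<open>M\<close> lifts to one of \<open>U\<close>.

  The eigenvectors of the second kind (birth eigenvectors) are the solutions of a homogeneous
  system with one equation per vertex and one unknown per edge. They exist when \<open>|E| > |V|\<close>;
  when \<open>|E| \<le> |V|\<close>, a solution produces a nonzero vector \<open>h\<close> in the left kernel, i.e.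
  \<open>h(o e) b(e) = l h(t e) b(e\<^sup>-)\<close> on all arcs. For \<open>U1\<close> such an \<open>h\<close> is an eigenfunction of \<open>T\<close>
  for \<open>l\<close>; there \<open>M\<close> is \<open>T\<close> conjugated by complex conjugation, which preserves the real
  spectrum of the Hermitian \<open>T\<close>. For \<open>U2\<close>, \<open>M = L + 1\<close>, the eigenvalue \<open>1\<close> always comes from
  the constants, and for \<open>l = -1\<close> reversibility makes \<open>h / m\<^sub>V\<close> alternate in sign along edges,
  so the graph is bipartite; trees are bipartite since an odd closed walk contains a cycle.
\<close>

section \<open>Homogeneous linear systems\<close>

lemma kernel_nontrivial_iff_det_zero:
  fixes M :: "nat \<Rightarrow> nat \<Rightarrow> 'a::idom"
  shows "det (mat n n (\<lambda>(i, j). M i j)) = 0 \<longleftrightarrow>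
         (\<exists>x. (\<exists>j<n. x j \<noteq> 0) \<and> (\<forall>i<n. (\<Sum>j<n. M i j * x j) = 0))"
proof -
  have prod: "vec_index (mat n n (\<lambda>(i, j). M i j) *\<^sub>v v) i = (\<Sum>j<n. M i j * vec_index v j)"
    if "v \<in> carrier_vec n" "i < n" for v i
    using that by (simp add: scalar_prod_def atLeast0LessThan)
  show ?thesis
    unfolding det_0_iff_vec_prod_zero[OF mat_carrier]
  proof safe
    fix v :: "'a vec" assume v: "v \<in> carrier_vec n" "v \<noteq> 0\<^sub>v n"
      and kernel: "mat n n (\<lambda>(i, j). M i j) *\<^sub>v v = 0\<^sub>v n"
    show "\<exists>x. (\<exists>j<n. x j \<noteq> 0) \<and> (\<forall>i<n. (\<Sum>j<n. M i j * x j) = 0)"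
    proof (intro exI[of _ "vec_index v"] conjI allI impI)
      show "\<exists>j<n. vec_index v j \<noteq> 0" using v by (auto simp: vec_eq_iff)
      show "(\<Sum>j<n. M i j * vec_index v j) = 0" if "i < n" for i
        using prod[OF v(1) that] kernel that by (metis index_zero_vec(1))
    qed
  next
    fix x j assume "j < n" "x j \<noteq> 0" and kernel: "\<forall>i<n. (\<Sum>j<n. M i j * x j) = 0"
    then show "\<exists>v. v \<in> carrier_vec n \<and> v \<noteq> 0\<^sub>v n \<and> mat n n (\<lambda>(i, j). M i j) *\<^sub>v v = 0\<^sub>v n"
      using prod[of "vec n x"] by (intro exI[of _ "vec n x"]) (auto simp: vec_eq_iff)
  qed
qed

lemma square_kernel_transpose:
  fixes M :: "nat \<Rightarrow> nat \<Rightarrow> 'a::idom"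
  assumes "\<exists>x. (\<exists>j<n. x j \<noteq> 0) \<and> (\<forall>i<n. (\<Sum>j<n. M i j * x j) = 0)"
  shows "\<exists>y. (\<exists>i<n. y i \<noteq> 0) \<and> (\<forall>j<n. (\<Sum>i<n. M i j * y i) = 0)"
proof -
  have "transpose_mat (mat n n (\<lambda>(i, j). M i j)) = mat n n (\<lambda>(j, i). M i j)"
    by auto
  then have det_eq: "det (mat n n (\<lambda>(j, i). M i j)) = det (mat n n (\<lambda>(i, j). M i j))"
    by (metis det_transpose mat_carrier)
  have "det (mat n n (\<lambda>(i, j). M i j)) = 0"
    using assms kernel_nontrivial_iff_det_zero by blast
  then have "det (mat n n (\<lambda>(j, i). M i j)) = 0"
    using det_eq by simp
  then show ?thesis
    using kernel_nontrivial_iff_det_zero[of n "\<lambda>j i. M i j"] by simp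
qed

lemma wide_kernel_nontrivial:
  fixes M :: "nat \<Rightarrow> nat \<Rightarrow> 'a::idom"
  assumes "m < n"
  shows "\<exists>x. (\<exists>j<n. x j \<noteq> 0) \<and> (\<forall>i<m. (\<Sum>j<n. M i j * x j) = 0)"
proof -
  define N where "N j i = (if i < m then M i j else 0)" for i j
  have "\<exists>y. (\<exists>i<n. y i \<noteq> 0) \<and> (\<forall>j<n. (\<Sum>i<n. N j i * y i) = 0)"
    \<comment> \<open>the padded rows \<open>m, \<dots>, n - 1\<close> vanish, so the last unit vector solves the transposed system\<close>
    using assms
    by (intro exI[of _ "\<lambda>i. if i = n - 1 then 1 else 0"]) (auto simp: N_def intro!: sum.neutral)
  then obtain x where x: "\<exists>j<n. x j \<noteq> 0" "\<forall>i<n. (\<Sum>j<n. N j i * x j) = 0"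
    using square_kernel_transpose by blast
  have "(\<Sum>j<n. M i j * x j) = 0" if "i < m" for i
    using x(2)[rule_format, of i] that assms by (simp add: N_def)
  with x(1) show ?thesis by (intro exI[of _ x] conjI allI impI) auto
qed

lemma kernel_reindex:
  fixes c :: "'j \<Rightarrow> 'i \<Rightarrow> 'a::comm_ring_1"
  assumes f: "bij_betw f {..<n} X" and g: "bij_betw g {..<m} Y"
  shows "(\<exists>x. (\<exists>i\<in>X. x i \<noteq> 0) \<and> (\<forall>j\<in>Y. (\<Sum>i\<in>X. c j i * x i) = 0)) \<longleftrightarrow>
         (\<exists>x. (\<exists>k<n. x k \<noteq> 0) \<and> (\<forall>l<m. (\<Sum>k<n. c (g l) (f k) * x k) = 0))"
proof -
  have sum_X: "(\<Sum>i\<in>X. h i) = (\<Sum>k<n. h (f k))" for h :: "'i \<Rightarrow> 'a"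
    by (rule sum.reindex_bij_betw[OF f, symmetric])
  have X: "X = f ` {..<n}" and Y: "Y = g ` {..<m}"
    using f g by (auto simp: bij_betw_def)
  show ?thesis
  proof
    assume "\<exists>x. (\<exists>i\<in>X. x i \<noteq> 0) \<and> (\<forall>j\<in>Y. (\<Sum>i\<in>X. c j i * x i) = 0)"
    then obtain x where "\<exists>i\<in>X. x i \<noteq> 0" "\<forall>j\<in>Y. (\<Sum>i\<in>X. c j i * x i) = 0"
      by blast
    then show "\<exists>x. (\<exists>k<n. x k \<noteq> 0) \<and> (\<forall>l<m. (\<Sum>k<n. c (g l) (f k) * x k) = 0)"
      unfolding sum_X by (intro exI[of _ "x \<circ> f"]) (auto simp: X Y)
  next
    assume "\<exists>x. (\<exists>k<n. x k \<noteq> 0) \<and> (\<forall>l<m. (\<Sum>k<n. c (g l) (f k) * x k) = 0)"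
    then obtain x where x: "\<exists>k<n. x k \<noteq> 0" "\<forall>l<m. (\<Sum>k<n. c (g l) (f k) * x k) = 0"
      by blast
    define x' where "x' = x \<circ> inv_into {..<n} f"
    have x'f: "x' (f k) = x k" if "k < n" for k
      using f that by (simp add: x'_def bij_betw_inv_into_left)
    have nz: "\<exists>i\<in>X. x' i \<noteq> 0"
      using x(1) x'f by (auto simp: X)
    have "(\<Sum>i\<in>X. c (g l) i * x' i) = 0" if "l < m" for l
      using x(2) that unfolding sum_X by (simp add: x'f)
    then have "\<forall>j\<in>Y. (\<Sum>i\<in>X. c j i * x' i) = 0"
      by (auto simp: Y)
    with nz show "\<exists>x. (\<exists>i\<in>X. x i \<noteq> 0) \<and> (\<forall>j\<in>Y. (\<Sum>i\<in>X. c j i * x i) = 0)"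
      by blast
  qed
qed

lemma homogeneous_system_nontrivial_solution:
  fixes c :: "'j \<Rightarrow> 'i \<Rightarrow> 'a::idom"
  assumes "finite X" "finite Y" "card Y < card X"
  shows "\<exists>x. (\<exists>i\<in>X. x i \<noteq> 0) \<and> (\<forall>j\<in>Y. (\<Sum>i\<in>X. c j i * x i) = 0)"
proof -
  obtain f where f: "bij_betw f {..<card X} X"
    using ex_bij_betw_nat_finite[OF assms(1)] by (auto simp: atLeast0LessThan)
  obtain g where g: "bij_betw g {..<card Y} Y"
    using ex_bij_betw_nat_finite[OF assms(2)] by (auto simp: atLeast0LessThan)
  show ?thesis
    unfolding kernel_reindex[OF f g] using assms(3) by (rule wide_kernel_nontrivial)
qed

lemma left_kernel_nontrivial:
  fixes c :: "'j \<Rightarrow> 'i \<Rightarrow> 'a::idom"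
  assumes "finite X" "finite Y" "card X \<le> card Y"
    and "\<exists>x. (\<exists>i\<in>X. x i \<noteq> 0) \<and> (\<forall>j\<in>Y. (\<Sum>i\<in>X. c j i * x i) = 0)"
  shows "\<exists>h. (\<exists>j\<in>Y. h j \<noteq> 0) \<and> (\<forall>i\<in>X. (\<Sum>j\<in>Y. c j i * h j) = 0)"
proof (cases "card X = card Y")
  case True
  obtain f where f: "bij_betw f {..<card X} X"
    using ex_bij_betw_nat_finite[OF assms(1)] by (auto simp: atLeast0LessThan)
  obtain g where g: "bij_betw g {..<card X} Y"
    using ex_bij_betw_nat_finite[OF assms(2)] True by (auto simp: atLeast0LessThan)
  show ?thesis
    using assms(4) unfolding kernel_reindex[OF g f] kernel_reindex[OF f g]
    by (rule square_kernel_transpose)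
next
  case False
  then show ?thesis
    using homogeneous_system_nontrivial_solution[of Y X "\<lambda>i j. c j i"] assms(1-3) by simp
qed

section \<open>The walk operator of a weighted arc system\<close>

lemma rev_arc_rev_arc [simp]: "rev_arc (rev_arc e) = e"
  and fst_rev_arc [simp]: "fst (rev_arc e) = snd e"
  and snd_rev_arc [simp]: "snd (rev_arc e) = fst e"
  by (simp_all add: rev_arc_def)

definition walk_op ::
    "('a \<times> 'a) set \<Rightarrow> ('a \<times> 'a \<Rightarrow> complex) \<Rightarrow> ('a \<times> 'a \<Rightarrow> complex) \<Rightarrow> ('a \<times> 'a \<Rightarrow> complex) \<Rightarrow> 'a \<times> 'a \<Rightarrow> complex"
  where "walk_op A a b \<psi> e =
    (\<Sum>f\<in>{f\<in>A. snd f = fst e}. (2 * a e * b (rev_arc f) - (if e = rev_arc f then 1 else 0)) * \<psi> f)"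

definition vertex_op ::
    "('a \<times> 'a) set \<Rightarrow> ('a \<times> 'a \<Rightarrow> complex) \<Rightarrow> ('a \<times> 'a \<Rightarrow> complex) \<Rightarrow> ('a \<Rightarrow> complex) \<Rightarrow> 'a \<Rightarrow> complex"
  where "vertex_op A a b f u = (\<Sum>g\<in>{g\<in>A. fst g = u}. b g * a (rev_arc g) * f (snd g))"

definition incoming :: "('a \<times> 'a) set \<Rightarrow> ('a \<times> 'a \<Rightarrow> complex) \<Rightarrow> ('a \<times> 'a \<Rightarrow> complex) \<Rightarrow> 'a \<Rightarrow> complex"
  where "incoming A b \<psi> u = (\<Sum>f\<in>{f\<in>A. snd f = u}. b (rev_arc f) * \<psi> f)"

definition outgoing :: "('a \<times> 'a) set \<Rightarrow> ('a \<times> 'a \<Rightarrow> complex) \<Rightarrow> ('a \<times> 'a \<Rightarrow> complex) \<Rightarrow> 'a \<Rightarrow> complex"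
  where "outgoing A b \<psi> u = (\<Sum>g\<in>{g\<in>A. fst g = u}. b g * \<psi> g)"

definition birth_eigenvector ::
    "('a \<times> 'a) set \<Rightarrow> 'a set \<Rightarrow> ('a \<times> 'a \<Rightarrow> complex) \<Rightarrow> complex \<Rightarrow> ('a \<times> 'a \<Rightarrow> complex) \<Rightarrow> bool"
  where "birth_eigenvector A V b l \<psi> \<longleftrightarrow>
    (\<forall>e\<in>A. \<psi> (rev_arc e) = - l * \<psi> e) \<and> (\<forall>u\<in>V. outgoing A b \<psi> u = 0) \<and> (\<exists>e\<in>A. \<psi> e \<noteq> 0)"

lemma walk_op_linear:
  "walk_op A a b (\<lambda>e. x * \<alpha> e + y * \<beta> e) e = x * walk_op A a b \<alpha> e + y * walk_op A a b \<beta> e"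
  unfolding walk_op_def sum_distrib_left sum.distrib[symmetric]
  by (intro sum.cong refl) (simp add: algebra_simps)

locale arc_system =
  fixes A :: "('a \<times> 'a) set" and V :: "'a set" and a b :: "'a \<times> 'a \<Rightarrow> complex"
  assumes finite_arcs: "finite A"
    and rev_arc_in: "e \<in> A \<Longrightarrow> rev_arc e \<in> A"
    and fst_in: "e \<in> A \<Longrightarrow> fst e \<in> V"
    and normalized: "u \<in> V \<Longrightarrow> (\<Sum>g\<in>{g\<in>A. fst g = u}. b g * a g) = 1"
begin

lemma snd_in: "e \<in> A \<Longrightarrow> snd e \<in> V"
  using fst_in[OF rev_arc_in] by simp

lemma birth_eigenvalue:
  assumes "birth_eigenvector A V b l \<psi>"
  shows "l = 1 \<or> l = -1"
proof -
  obtain e where e: "e \<in> A" "\<psi> e \<noteq> 0"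
    using assms unfolding birth_eigenvector_def by blast
  have rel: "\<psi> (rev_arc f) = - l * \<psi> f" if "f \<in> A" for f
    using assms that unfolding birth_eigenvector_def by blast
  have "\<psi> e = - l * \<psi> (rev_arc e)"
    using rel[OF rev_arc_in[OF e(1)]] by simp
  with rel[OF e(1)] have "(l * l - 1) * \<psi> e = 0"
    by (simp add: algebra_simps)
  then show ?thesis
    using e(2) by (simp add: square_eq_1_iff)
qed

lemma sum_in_arcs_eq_sum_out_arcs:
  "(\<Sum>f\<in>{f\<in>A. snd f = u}. h f) = (\<Sum>g\<in>{g\<in>A. fst g = u}. h (rev_arc g))"
proof -
  have "{f\<in>A. snd f = u} = rev_arc ` {g\<in>A. fst g = u}"
  proof (intro equalityI subsetI)
    fix f assume "f \<in> {f\<in>A. snd f = u}"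
    then have "rev_arc f \<in> {g\<in>A. fst g = u}"
      using rev_arc_in by auto
    then show "f \<in> rev_arc ` {g\<in>A. fst g = u}"
      using image_eqI[of f rev_arc "rev_arc f"] by simp
  qed (auto simp: rev_arc_in)
  moreover have "inj_on rev_arc {g\<in>A. fst g = u}"
    by (metis inj_onI rev_arc_rev_arc)
  ultimately show ?thesis
    by (simp add: sum.reindex)
qed

lemma walk_op_eq:
  assumes "e \<in> A"
  shows "walk_op A a b \<psi> e = 2 * a e * incoming A b \<psi> (fst e) - \<psi> (rev_arc e)"
proof -
  let ?S = "{f\<in>A. snd f = fst e}"
  have "walk_op A a b \<psi> e =
      (\<Sum>f\<in>?S. 2 * a e * (b (rev_arc f) * \<psi> f)) - (\<Sum>f\<in>?S. if f = rev_arc e then \<psi> f else 0)"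
    unfolding walk_op_def sum_subtractf[symmetric]
    by (intro sum.cong refl) (auto simp: algebra_simps)
  also have "(\<Sum>f\<in>?S. if f = rev_arc e then \<psi> f else 0) = \<psi> (rev_arc e)"
    using finite_arcs rev_arc_in[OF assms] by (simp add: sum.delta' eq_commute)
  finally show ?thesis
    unfolding incoming_def by (simp add: sum_distrib_left)
qed

lemma outgoing_walk_op:
  assumes "u \<in> V"
  shows "outgoing A b (walk_op A a b \<psi>) u = incoming A b \<psi> u"
proof -
  have "outgoing A b (walk_op A a b \<psi>) u =
      (\<Sum>g\<in>{g\<in>A. fst g = u}. 2 * incoming A b \<psi> u * (b g * a g) - b g * \<psi> (rev_arc g))"
    unfolding outgoing_def by (intro sum.cong refl) (auto simp: walk_op_eq algebra_simps)
  also have "\<dots> = 2 * incoming A b \<psi> u - incoming A b \<psi> u"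
    unfolding sum_subtractf sum_distrib_left[symmetric] normalized[OF assms]
    by (simp add: incoming_def sum_in_arcs_eq_sum_out_arcs)
  finally show ?thesis
    by simp
qed

lemma incoming_walk_op:
  "incoming A b (walk_op A a b \<psi>) u = 2 * vertex_op A a b (incoming A b \<psi>) u - outgoing A b \<psi> u"
proof -
  have "incoming A b (walk_op A a b \<psi>) u = (\<Sum>g\<in>{g\<in>A. fst g = u}. b g * walk_op A a b \<psi> (rev_arc g))"
    unfolding incoming_def sum_in_arcs_eq_sum_out_arcs by simp
  also have "\<dots> = (\<Sum>g\<in>{g\<in>A. fst g = u}.
      2 * (b g * a (rev_arc g) * incoming A b \<psi> (snd g)) - b g * \<psi> g)"
    by (intro sum.cong refl) (auto simp: walk_op_eq rev_arc_in algebra_simps)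
  finally show ?thesis
    unfolding sum_subtractf sum_distrib_left[symmetric] vertex_op_def outgoing_def .
qed

lemma walk_eigenvector_vertex_relations:
  assumes eig: "\<forall>e\<in>A. walk_op A a b \<psi> e = l * \<psi> e"
  shows "u \<in> V \<Longrightarrow> incoming A b \<psi> u = l * outgoing A b \<psi> u"
    and "l * incoming A b \<psi> u = 2 * vertex_op A a b (incoming A b \<psi>) u - outgoing A b \<psi> u"
proof -
  have "outgoing A b (walk_op A a b \<psi>) u = l * outgoing A b \<psi> u"
    unfolding outgoing_def sum_distrib_left using eig by (intro sum.cong) auto
  then show "u \<in> V \<Longrightarrow> incoming A b \<psi> u = l * outgoing A b \<psi> u"
    using outgoing_walk_op by simp
  have "incoming A b (walk_op A a b \<psi>) u = l * incoming A b \<psi> u"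
    unfolding incoming_def sum_distrib_left using eig by (intro sum.cong) auto
  then show "l * incoming A b \<psi> u = 2 * vertex_op A a b (incoming A b \<psi>) u - outgoing A b \<psi> u"
    using incoming_walk_op by simp
qed

lemma walk_eigenvector_cases:
  assumes eig: "\<forall>e\<in>A. walk_op A a b \<psi> e = l * \<psi> e" and nz: "\<exists>e\<in>A. \<psi> e \<noteq> 0"
  shows "(l \<noteq> 0 \<and> phi1 l \<in> op_spectrum V (vertex_op A a b)) \<or> birth_eigenvector A V b l \<psi>"
proof (cases "\<forall>u\<in>V. outgoing A b \<psi> u = 0")
  case True
  have "\<psi> (rev_arc e) = - l * \<psi> e" if "e \<in> A" for e
    using walk_op_eq[OF that, of \<psi>] eig that True fst_in[OF that]
      walk_eigenvector_vertex_relations(1)[OF eig, of "fst e"] by simp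
  then show ?thesis
    using True nz unfolding birth_eigenvector_def by blast
next
  case False
  then obtain u0 where u0: "u0 \<in> V" "outgoing A b \<psi> u0 \<noteq> 0"
    by blast
  have "l \<noteq> 0"
  proof
    assume "l = 0"
    then have "\<psi> e = 0" if "e \<in> A" for e
      using walk_op_eq[OF rev_arc_in[OF that], of \<psi>] eig rev_arc_in[OF that]
        walk_eigenvector_vertex_relations(1)[OF eig snd_in[OF that]] by simp
    then show False
      using nz by blast
  qed
  define F where "F u = (if u \<in> V then outgoing A b \<psi> u else 0)" for u
  have "vertex_op A a b F u = phi1 l * F u" if "u \<in> V" for u
  proof -
    have "vertex_op A a b (incoming A b \<psi>) u = l * vertex_op A a b F u"
      unfolding vertex_op_def sum_distrib_left
      by (intro sum.cong refl) (auto simp: F_def snd_in walk_eigenvector_vertex_relations(1)[OF eig])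
    then have "l * (l * F u) = 2 * (l * vertex_op A a b F u) - F u"
      using walk_eigenvector_vertex_relations[OF eig, of u] that by (simp add: F_def)
    then show ?thesis
      using \<open>l \<noteq> 0\<close> by (simp add: phi1_def field_simps)
  qed
  then have "phi1 l \<in> op_spectrum V (vertex_op A a b)"
    unfolding op_spectrum_def using u0 by (intro CollectI exI[of _ F]) (auto simp: F_def)
  then show ?thesis
    using \<open>l \<noteq> 0\<close> by blast
qed

lemma birth_eigenvalue_in_walk_spectrum:
  assumes "birth_eigenvector A V b l \<psi>"
  shows "l \<in> op_spectrum A (walk_op A a b)"
proof -
  have rel: "\<forall>e\<in>A. \<psi> (rev_arc e) = - l * \<psi> e" and out: "\<forall>u\<in>V. outgoing A b \<psi> u = 0"
    and nz: "\<exists>e\<in>A. \<psi> e \<noteq> 0"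
    using assms unfolding birth_eigenvector_def by blast+
  define \<psi>' where "\<psi>' e = (if e \<in> A then \<psi> e else 0)" for e
  have "walk_op A a b \<psi>' e = l * \<psi>' e" if e: "e \<in> A" for e
  proof -
    have "incoming A b \<psi> (fst e) = - l * outgoing A b \<psi> (fst e)"
      unfolding incoming_def outgoing_def sum_in_arcs_eq_sum_out_arcs sum_distrib_left
      using rel by (intro sum.cong) auto
    then have "walk_op A a b \<psi> e = l * \<psi> e"
      using walk_op_eq[OF e] rel e out fst_in[OF e] by simp
    moreover have "walk_op A a b \<psi>' e = walk_op A a b \<psi> e"
      unfolding walk_op_def \<psi>'_def by (intro sum.cong) auto
    ultimately show ?thesis
      using e by (simp add: \<psi>'_def)
  qed
  then show ?thesis
    unfolding op_spectrum_def using nz by (intro CollectI exI[of _ \<psi>']) (auto simp: \<psi>'_def)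
qed

lemma vertex_eigenfunction_lift:
  assumes f: "\<forall>u\<in>V. vertex_op A a b f u = \<mu> * f u"
  defines "\<alpha> \<equiv> \<lambda>e. if e \<in> A then a e * f (fst e) else 0"
    and "\<beta> \<equiv> \<lambda>e. if e \<in> A then a (rev_arc e) * f (snd e) else 0"
  shows "e \<in> A \<Longrightarrow> walk_op A a b \<alpha> e = 2 * \<mu> * \<alpha> e - \<beta> e"
    and "e \<in> A \<Longrightarrow> walk_op A a b \<beta> e = \<alpha> e"
    and "u \<in> V \<Longrightarrow> outgoing A b \<alpha> u = f u"
    and "u \<in> V \<Longrightarrow> outgoing A b \<beta> u = \<mu> * f u"
proof -
  have in_\<alpha>: "incoming A b \<alpha> u = \<mu> * f u" if "u \<in> V" for u
  proof -
    have "incoming A b \<alpha> u = vertex_op A a b f u"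
      unfolding incoming_def sum_in_arcs_eq_sum_out_arcs vertex_op_def \<alpha>_def
      by (intro sum.cong refl) (auto simp: rev_arc_in)
    then show ?thesis
      using f that by simp
  qed
  have in_\<beta>: "incoming A b \<beta> u = f u" if "u \<in> V" for u
  proof -
    have "incoming A b \<beta> u = (\<Sum>g\<in>{g\<in>A. fst g = u}. b g * a g) * f u"
      unfolding incoming_def sum_in_arcs_eq_sum_out_arcs \<beta>_def sum_distrib_right
      by (intro sum.cong refl) (auto simp: rev_arc_in)
    then show ?thesis
      using normalized[OF that] by simp
  qed
  show "e \<in> A \<Longrightarrow> walk_op A a b \<alpha> e = 2 * \<mu> * \<alpha> e - \<beta> e"
    using walk_op_eq in_\<alpha> fst_in rev_arc_in by (simp add: \<alpha>_def \<beta>_def)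
  show "e \<in> A \<Longrightarrow> walk_op A a b \<beta> e = \<alpha> e"
    using walk_op_eq in_\<beta> fst_in rev_arc_in by (simp add: \<alpha>_def \<beta>_def)
  show "u \<in> V \<Longrightarrow> outgoing A b \<alpha> u = f u"
  proof -
    have "outgoing A b \<alpha> u = (\<Sum>g\<in>{g\<in>A. fst g = u}. b g * a g) * f u"
      unfolding outgoing_def \<alpha>_def sum_distrib_right by (intro sum.cong refl) auto
    then show "u \<in> V \<Longrightarrow> outgoing A b \<alpha> u = f u"
      using normalized by simp
  qed
  show "u \<in> V \<Longrightarrow> outgoing A b \<beta> u = \<mu> * f u"
  proof -
    have "outgoing A b \<beta> u = vertex_op A a b f u"
      unfolding outgoing_def \<beta>_def vertex_op_def by (intro sum.cong refl) (auto simp: mult.assoc)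
    then show "u \<in> V \<Longrightarrow> outgoing A b \<beta> u = \<mu> * f u"
      using f by simp
  qed
qed

lemma vertex_eigenfunction_lift_degenerate:
  assumes f: "\<forall>u\<in>V. vertex_op A a b f u = phi1 l * f u" and l: "l \<noteq> 0"
    and u0: "u0 \<in> V" "f u0 \<noteq> 0"
    and degenerate: "\<forall>e\<in>A. a (rev_arc e) * f (snd e) = l * (a e * f (fst e))"
  shows "l \<in> op_spectrum A (walk_op A a b)"
proof -
  define \<alpha> where "\<alpha> e = (if e \<in> A then a e * f (fst e) else 0)" for e
  define \<beta> where "\<beta> e = (if e \<in> A then a (rev_arc e) * f (snd e) else 0)" for e
  note lift = vertex_eigenfunction_lift[OF f, folded \<alpha>_def \<beta>_def]
  have \<beta>: "\<beta> e = l * \<alpha> e" if "e \<in> A" for e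
    using degenerate that by (simp add: \<alpha>_def \<beta>_def)
  have "outgoing A b \<beta> u0 = l * outgoing A b \<alpha> u0"
    unfolding outgoing_def sum_distrib_left using \<beta> by (intro sum.cong) (auto simp: mult_ac)
  then have "phi1 l = l"
    using lift(3,4)[OF u0(1)] u0(2) by simp
  then have "walk_op A a b \<alpha> e = l * \<alpha> e" if "e \<in> A" for e
    unfolding lift(1)[OF that] \<beta>[OF that] by (simp add: algebra_simps)
  moreover have "\<exists>e\<in>A. \<alpha> e \<noteq> 0"
  proof (rule ccontr)
    assume "\<not> (\<exists>e\<in>A. \<alpha> e \<noteq> 0)"
    then have "outgoing A b \<alpha> u0 = 0"
      unfolding outgoing_def by (intro sum.neutral) auto
    then show False
      using lift(3)[OF u0(1)] u0(2) by simp
  qed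
  ultimately show ?thesis
    unfolding op_spectrum_def by (intro CollectI exI[of _ \<alpha>]) (auto simp: \<alpha>_def)
qed

lemma vertex_eigenvalue_in_walk_spectrum:
  assumes l: "l \<noteq> 0" and \<mu>: "phi1 l \<in> op_spectrum V (vertex_op A a b)"
  shows "l \<in> op_spectrum A (walk_op A a b)"
proof -
  obtain f where f: "\<forall>u\<in>V. vertex_op A a b f u = phi1 l * f u" and "\<exists>u\<in>V. f u \<noteq> 0"
    using \<mu> unfolding op_spectrum_def by blast
  then obtain u0 where u0: "u0 \<in> V" "f u0 \<noteq> 0"
    by blast
  define \<alpha> where "\<alpha> e = (if e \<in> A then a e * f (fst e) else 0)" for e
  define \<beta> where "\<beta> e = (if e \<in> A then a (rev_arc e) * f (snd e) else 0)" for e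
  define \<psi> where "\<psi> e = 1 * \<alpha> e + (- 1 / l) * \<beta> e" for e
  show ?thesis
  proof (cases "\<exists>e\<in>A. \<psi> e \<noteq> 0")
    case True
    have "walk_op A a b \<psi> e = l * \<psi> e" if e: "e \<in> A" for e
    proof -
      have "walk_op A a b \<psi> e = (2 * phi1 l - 1 / l) * \<alpha> e - \<beta> e"
        unfolding \<psi>_def walk_op_linear vertex_eigenfunction_lift(1,2)[OF f e, folded \<alpha>_def \<beta>_def]
        by (simp add: algebra_simps)
      also have "\<dots> = l * \<psi> e"
        using l by (simp add: \<psi>_def phi1_def field_simps)
      finally show ?thesis .
    qed
    then show ?thesis
      unfolding op_spectrum_def using True
      by (intro CollectI exI[of _ \<psi>]) (auto simp: \<psi>_def \<alpha>_def \<beta>_def)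
  next
    case False
    then have "\<forall>e\<in>A. a (rev_arc e) * f (snd e) = l * (a e * f (fst e))"
      using l by (simp add: \<psi>_def \<alpha>_def \<beta>_def field_simps)
    then show ?thesis
      by (rule vertex_eigenfunction_lift_degenerate[OF f l u0])
  qed
qed

theorem walk_op_spectrum:
  "op_spectrum A (walk_op A a b) =
    preim phi1 (op_spectrum V (vertex_op A a b)) \<union> {l. \<exists>\<psi>. birth_eigenvector A V b l \<psi>}"
proof (intro equalityI subsetI)
  fix l assume "l \<in> op_spectrum A (walk_op A a b)"
  then obtain \<psi> where "\<forall>e\<in>A. walk_op A a b \<psi> e = l * \<psi> e" "\<exists>e\<in>A. \<psi> e \<noteq> 0"
    unfolding op_spectrum_def by blast
  from walk_eigenvector_cases[OF this]
  show "l \<in> preim phi1 (op_spectrum V (vertex_op A a b)) \<union> {l. \<exists>\<psi>. birth_eigenvector A V b l \<psi>}"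
    unfolding preim_def by blast
next
  fix l assume "l \<in> preim phi1 (op_spectrum V (vertex_op A a b)) \<union> {l. \<exists>\<psi>. birth_eigenvector A V b l \<psi>}"
  then show "l \<in> op_spectrum A (walk_op A a b)"
    unfolding preim_def
    using vertex_eigenvalue_in_walk_spectrum birth_eigenvalue_in_walk_spectrum by blast
qed

end

section \<open>Arcs of a simple graph and birth eigenvectors\<close>

definition arc_edge :: "'a \<times> 'a \<Rightarrow> 'a set"
  where "arc_edge e = {fst e, snd e}"

definition orient :: "'a set set \<Rightarrow> 'a set \<Rightarrow> 'a \<times> 'a"
  where "orient E \<epsilon> = (SOME p. p \<in> arcs E \<and> arc_edge p = \<epsilon>)"

definition skew_extension :: "'a set set \<Rightarrow> complex \<Rightarrow> ('a set \<Rightarrow> complex) \<Rightarrow> 'a \<times> 'a \<Rightarrow> complex"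
  where "skew_extension E l x e =
    (if e \<in> arcs E then if e = orient E (arc_edge e) then x (arc_edge e) else - l * x (arc_edge e) else 0)"

definition incidence_coeff ::
    "'a set set \<Rightarrow> ('a \<times> 'a \<Rightarrow> complex) \<Rightarrow> complex \<Rightarrow> 'a \<Rightarrow> 'a set \<Rightarrow> complex"
  where "incidence_coeff E b l u \<epsilon> =
    (if u = fst (orient E \<epsilon>) then b (orient E \<epsilon>)
     else if u = snd (orient E \<epsilon>) then - l * b (rev_arc (orient E \<epsilon>)) else 0)"

definition dual_birth_vector ::
    "'a set \<Rightarrow> 'a set set \<Rightarrow> ('a \<times> 'a \<Rightarrow> complex) \<Rightarrow> complex \<Rightarrow> ('a \<Rightarrow> complex) \<Rightarrow> bool"
  where "dual_birth_vector V E b l h \<longleftrightarrow>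
    (\<exists>u\<in>V. h u \<noteq> 0) \<and> (\<forall>e\<in>arcs E. h (fst e) * b e = l * h (snd e) * b (rev_arc e))"

lemma arc_edge_rev_arc [simp]: "arc_edge (rev_arc e) = arc_edge e"
  by (auto simp: arc_edge_def)

locale sgraph =
  fixes V :: "'a set" and E :: "'a set set"
  assumes simple: "simple_graph V E"
begin

lemma finite_vertices: "finite V"
  using simple by (simp add: simple_graph_def)

lemma finite_edges: "finite E"
proof -
  have "E \<subseteq> Pow V"
    using simple by (auto simp: simple_graph_def)
  then show ?thesis
    using finite_vertices by (meson finite_Pow_iff rev_finite_subset)
qed

lemma arc_vertices: "e \<in> arcs E \<Longrightarrow> fst e \<in> V \<and> snd e \<in> V"
  using simple by (auto simp: simple_graph_def arcs_def)

lemma finite_arcs: "finite (arcs E)"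
proof -
  have "arcs E \<subseteq> V \<times> V"
    using arc_vertices by auto
  then show ?thesis
    using finite_vertices by (meson finite_SigmaI rev_finite_subset)
qed

lemma rev_arc_in_arcs: "e \<in> arcs E \<Longrightarrow> rev_arc e \<in> arcs E"
  by (auto simp: arcs_def rev_arc_def insert_commute)

lemma arc_not_loop: "e \<in> arcs E \<Longrightarrow> fst e \<noteq> snd e"
  using simple by (auto simp: simple_graph_def arcs_def)

lemma arc_edge_in_edges: "e \<in> arcs E \<Longrightarrow> arc_edge e \<in> E"
  by (auto simp: arcs_def arc_edge_def)

lemma arc_system_arcs:
  assumes "\<And>u. u \<in> V \<Longrightarrow> (\<Sum>g\<in>{g\<in>arcs E. fst g = u}. b g * a g) = 1"
  shows "arc_system (arcs E) V a b"
  using assms finite_arcs rev_arc_in_arcs arc_vertices by unfold_locales blast+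

lemma orient:
  assumes "\<epsilon> \<in> E"
  shows "orient E \<epsilon> \<in> arcs E" and "arc_edge (orient E \<epsilon>) = \<epsilon>"
proof -
  obtain x y where "\<epsilon> = {x, y}"
    using simple assms by (auto simp: simple_graph_def card_2_iff)
  then have "(x, y) \<in> arcs E \<and> arc_edge (x, y) = \<epsilon>"
    using assms by (simp add: arcs_def arc_edge_def)
  then have "orient E \<epsilon> \<in> arcs E \<and> arc_edge (orient E \<epsilon>) = \<epsilon>"
    unfolding orient_def by (rule someI)
  then show "orient E \<epsilon> \<in> arcs E" and "arc_edge (orient E \<epsilon>) = \<epsilon>"
    by blast+
qed

lemma orient_arc_edge:
  assumes "e \<in> arcs E"
  shows "orient E (arc_edge e) = e \<or> orient E (arc_edge e) = rev_arc e"
proof -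
  have "arc_edge (orient E (arc_edge e)) = arc_edge e"
    using orient(2)[OF arc_edge_in_edges[OF assms]] .
  then show ?thesis
    by (cases e; cases "orient E (arc_edge e)") (auto simp: arc_edge_def rev_arc_def doubleton_eq_iff)
qed

lemma skew_extension_rev_arc:
  assumes l: "l * l = 1" and e: "e \<in> arcs E"
  shows "skew_extension E l x (rev_arc e) = - l * skew_extension E l x e"
proof -
  have ne: "rev_arc e \<noteq> e"
    using arc_not_loop[OF e] by (auto simp: rev_arc_def prod_eq_iff)
  from orient_arc_edge[OF e] show ?thesis
  proof
    assume "orient E (arc_edge e) = e"
    then show ?thesis
      using ne e rev_arc_in_arcs[OF e] by (simp add: skew_extension_def)
  next
    assume "orient E (arc_edge e) = rev_arc e"
    then have "skew_extension E l x (rev_arc e) = l * l * x (arc_edge e)"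
      and "skew_extension E l x e = - l * x (arc_edge e)"
      using ne e rev_arc_in_arcs[OF e] l by (simp_all add: skew_extension_def)
    then show ?thesis
      by simp
  qed
qed

lemma skew_extension_orient:
  assumes "l * l = 1" and rel: "\<forall>e\<in>arcs E. \<psi> (rev_arc e) = - l * \<psi> e" and e: "e \<in> arcs E"
  shows "skew_extension E l (\<psi> \<circ> orient E) e = \<psi> e"
proof (cases "orient E (arc_edge e) = e")
  case False
  then have "orient E (arc_edge e) = rev_arc e"
    using orient_arc_edge[OF e] by simp
  then show ?thesis
    using False rel e assms(1) by (simp add: skew_extension_def algebra_simps)
qed (simp add: skew_extension_def e)

lemma incidence_coeff_eq_0:
  assumes "\<epsilon> \<in> E" and not_out: "\<epsilon> \<notin> arc_edge ` {g\<in>arcs E. fst g = u}"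
  shows "incidence_coeff E b l u \<epsilon> = 0"
proof -
  let ?p = "orient E \<epsilon>"
  have p: "?p \<in> arcs E" "arc_edge ?p = \<epsilon>" "rev_arc ?p \<in> arcs E"
    using assms(1) orient[of \<epsilon>] rev_arc_in_arcs by auto
  have "u \<noteq> fst ?p"
  proof
    assume "u = fst ?p"
    then have "?p \<in> {g\<in>arcs E. fst g = u}"
      using p by simp
    then show False
      using not_out p(2) by blast
  qed
  moreover have "u \<noteq> snd ?p"
  proof
    assume "u = snd ?p"
    then have "rev_arc ?p \<in> {g\<in>arcs E. fst g = u}"
      using p by simp
    then show False
      using not_out p(2) arc_edge_rev_arc[of ?p] by blast
  qed
  ultimately show ?thesis
    by (simp add: incidence_coeff_def)
qed

lemma incidence_coeff_arc_edge:
  assumes g: "g \<in> arcs E" and u: "fst g = u"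
  shows "incidence_coeff E b l u (arc_edge g) * x (arc_edge g) = b g * skew_extension E l x g"
proof -
  have ne: "snd g \<noteq> u" "g \<noteq> rev_arc g"
    using arc_not_loop[OF g] u by (auto simp: rev_arc_def prod_eq_iff)
  from orient_arc_edge[OF g] show ?thesis
  proof
    assume "orient E (arc_edge g) = g"
    then show ?thesis
      using g u by (simp add: incidence_coeff_def skew_extension_def)
  next
    assume "orient E (arc_edge g) = rev_arc g"
    then show ?thesis
      using g u ne by (simp add: incidence_coeff_def skew_extension_def)
  qed
qed

lemma outgoing_skew_extension:
  "outgoing (arcs E) b (skew_extension E l x) u = (\<Sum>\<epsilon>\<in>E. incidence_coeff E b l u \<epsilon> * x \<epsilon>)"
proof -
  let ?S = "{g\<in>arcs E. fst g = u}"
  have "inj_on arc_edge ?S"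
  proof (rule inj_onI)
    fix g g' assume g: "g \<in> ?S" and g': "g' \<in> ?S" and "arc_edge g = arc_edge g'"
    moreover have "snd g \<noteq> u" "snd g' \<noteq> u"
      using g g' arc_not_loop[of g] arc_not_loop[of g'] by auto
    ultimately show "g = g'"
      by (auto simp: arc_edge_def doubleton_eq_iff prod_eq_iff)
  qed
  have "(\<Sum>\<epsilon>\<in>E. incidence_coeff E b l u \<epsilon> * x \<epsilon>) = (\<Sum>\<epsilon>\<in>arc_edge ` ?S. incidence_coeff E b l u \<epsilon> * x \<epsilon>)"
    using arc_edge_in_edges incidence_coeff_eq_0
    by (intro sum.mono_neutral_right[OF finite_edges]) auto
  also have "\<dots> = (\<Sum>g\<in>?S. incidence_coeff E b l u (arc_edge g) * x (arc_edge g))"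
    using \<open>inj_on arc_edge ?S\<close> by (simp add: sum.reindex)
  also have "\<dots> = (\<Sum>g\<in>?S. b g * skew_extension E l x g)"
    using incidence_coeff_arc_edge by (intro sum.cong) auto
  finally show ?thesis
    unfolding outgoing_def by simp
qed

lemma dual_birth_vector_of_left_kernel:
  assumes h: "\<forall>\<epsilon>\<in>E. (\<Sum>u\<in>V. incidence_coeff E b l u \<epsilon> * h u) = 0" and "\<exists>u\<in>V. h u \<noteq> 0"
    and l: "l * l = 1"
  shows "dual_birth_vector V E b l h"
proof -
  have oriented: "h (fst p) * b p = l * h (snd p) * b (rev_arc p)" if "p = orient E \<epsilon>" "\<epsilon> \<in> E" for \<epsilon> p
  proof -
    have p: "p \<in> arcs E"
      using orient that by simp
    have "(\<Sum>u\<in>V. incidence_coeff E b l u \<epsilon> * h u) =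
        (\<Sum>u\<in>V. (if u = fst p then h (fst p) * b p else 0)
          + (if u = snd p then - l * h (snd p) * b (rev_arc p) else 0))"
      using arc_not_loop[OF p] by (intro sum.cong refl) (auto simp: incidence_coeff_def that(1))
    also have "\<dots> = h (fst p) * b p - l * h (snd p) * b (rev_arc p)"
      unfolding sum.distrib using arc_vertices[OF p] finite_vertices by (simp add: sum.delta')
    finally show ?thesis
      using h that(2) by simp
  qed
  have "h (fst e) * b e = l * h (snd e) * b (rev_arc e)" if e: "e \<in> arcs E" for e
  proof (cases "orient E (arc_edge e) = e")
    case True
    then show ?thesis
      using oriented[OF _ arc_edge_in_edges[OF e]] by simp
  next
    case False
    then have "orient E (arc_edge e) = rev_arc e"
      using orient_arc_edge[OF e] by simp
    then have "l * (h (snd e) * b (rev_arc e)) = l * l * h (fst e) * b e"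
      using oriented[OF _ arc_edge_in_edges[OF e], of "rev_arc e"] by (simp add: algebra_simps)
    then show ?thesis
      using l by (simp add: algebra_simps)
  qed
  then show ?thesis
    using assms(2) unfolding dual_birth_vector_def by blast
qed

lemma birth_eigenvector_exists:
  assumes "card V < card E" and l: "l * l = 1"
  shows "\<exists>\<psi>. birth_eigenvector (arcs E) V b l \<psi>"
proof -
  obtain x where x: "\<exists>\<epsilon>\<in>E. x \<epsilon> \<noteq> 0" "\<forall>u\<in>V. (\<Sum>\<epsilon>\<in>E. incidence_coeff E b l u \<epsilon> * x \<epsilon>) = 0"
    using homogeneous_system_nontrivial_solution[OF finite_edges finite_vertices assms(1)] by blast
  then obtain \<epsilon> where \<epsilon>: "\<epsilon> \<in> E" "x \<epsilon> \<noteq> 0"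
    by blast
  then have "\<exists>e\<in>arcs E. skew_extension E l x e \<noteq> 0"
    using orient[OF \<epsilon>(1)] by (intro bexI[of _ "orient E \<epsilon>"]) (simp_all add: skew_extension_def)
  moreover have "\<forall>u\<in>V. outgoing (arcs E) b (skew_extension E l x) u = 0"
    using x(2) by (simp add: outgoing_skew_extension)
  moreover have "\<forall>e\<in>arcs E. skew_extension E l x (rev_arc e) = - l * skew_extension E l x e"
    using skew_extension_rev_arc[OF l] by blast
  ultimately show ?thesis
    unfolding birth_eigenvector_def by blast
qed

lemma dual_birth_vector_of_birth_eigenvector:
  assumes "card E \<le> card V" and l: "l * l = 1" and \<psi>: "birth_eigenvector (arcs E) V b l \<psi>"
  shows "\<exists>h. dual_birth_vector V E b l h"
proof -
  have rel: "\<forall>e\<in>arcs E. \<psi> (rev_arc e) = - l * \<psi> e"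
    using \<psi> unfolding birth_eigenvector_def by blast
  define x where "x = \<psi> \<circ> orient E"
  have "outgoing (arcs E) b (skew_extension E l x) u = outgoing (arcs E) b \<psi> u" for u
    unfolding outgoing_def x_def using skew_extension_orient[OF l rel] by (intro sum.cong) auto
  then have "\<forall>u\<in>V. (\<Sum>\<epsilon>\<in>E. incidence_coeff E b l u \<epsilon> * x \<epsilon>) = 0"
    using \<psi> by (simp add: birth_eigenvector_def flip: outgoing_skew_extension)
  moreover have "\<exists>\<epsilon>\<in>E. x \<epsilon> \<noteq> 0"
  proof -
    obtain e where e: "e \<in> arcs E" "\<psi> e \<noteq> 0"
      using \<psi> unfolding birth_eigenvector_def by blast
    then have "skew_extension E l x e \<noteq> 0"
      using skew_extension_orient[OF l rel] by (simp add: x_def)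
    then have "x (arc_edge e) \<noteq> 0"
      unfolding skew_extension_def by (cases "e = orient E (arc_edge e)") (simp_all add: e(1))
    then show ?thesis
      using arc_edge_in_edges[OF e(1)] by blast
  qed
  ultimately obtain h where "\<exists>u\<in>V. h u \<noteq> 0" "\<forall>\<epsilon>\<in>E. (\<Sum>u\<in>V. incidence_coeff E b l u \<epsilon> * h u) = 0"
    using left_kernel_nontrivial[OF finite_edges finite_vertices assms(1)] by blast
  then show ?thesis
    using dual_birth_vector_of_left_kernel l by blast
qed

lemma dual_birth_vector_exists:
  assumes "card E < card V" and "l * l = 1"
  shows "\<exists>h. dual_birth_vector V E b l h"
proof -
  obtain h where "\<exists>u\<in>V. h u \<noteq> 0" "\<forall>\<epsilon>\<in>E. (\<Sum>u\<in>V. incidence_coeff E b l u \<epsilon> * h u) = 0"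
    using homogeneous_system_nontrivial_solution[OF finite_vertices finite_edges assms(1),
        of "\<lambda>\<epsilon> u. incidence_coeff E b l u \<epsilon>"] by blast
  then show ?thesis
    using dual_birth_vector_of_left_kernel assms(2) by blast
qed

end

section \<open>Odd closed walks and bipartiteness\<close>

definition walk :: "'a set set \<Rightarrow> 'a \<Rightarrow> 'a \<Rightarrow> 'a list \<Rightarrow> bool"
  where "walk E r u p \<longleftrightarrow> p \<noteq> [] \<and> hd p = r \<and> last p = u \<and> successively (adj E) p"

definition closed_walk :: "'a set set \<Rightarrow> 'a list \<Rightarrow> bool"
  where "closed_walk E ws \<longleftrightarrow> ws \<noteq> [] \<and> successively (adj E) ws \<and> adj E (last ws) (hd ws)"

lemma adj_sym: "adj E u v \<longleftrightarrow> adj E v u"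
  by (simp add: adj_def insert_commute)

lemma successively_adj_rev: "successively (adj E) xs \<Longrightarrow> successively (adj E) (rev xs)"
  by (induction xs)
    (auto simp: successively_append_iff successively_Cons last_rev adj_sym simp del: successively_rev)

lemma successively_infix: "successively P (xs @ ys @ zs) \<Longrightarrow> successively P ys"
  by (simp add: successively_append_iff)

lemma walk_exists: "(adj E)\<^sup>*\<^sup>* r u \<Longrightarrow> \<exists>p. walk E r u p"
proof (induction rule: rtranclp_induct)
  case base
  show ?case
    unfolding walk_def by (intro exI[of _ "[r]"]) auto
next
  case (step y z)
  then obtain p where "walk E r y p"
    by blast
  with step.hyps(2) show ?case
    unfolding walk_def by (intro exI[of _ "p @ [z]"]) (auto simp: successively_append_iff)
qed

lemma closed_walk_split:
  assumes "closed_walk E (xs @ [y] @ ys @ [y] @ zs)"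
  shows "closed_walk E (y # ys)" and "closed_walk E (y # zs @ xs)"
proof -
  have walk: "successively (adj E) (xs @ [y] @ ys @ [y] @ zs)"
    and close: "adj E (last (xs @ [y] @ ys @ [y] @ zs)) (hd (xs @ [y] @ ys @ [y] @ zs))"
    using assms by (auto simp: closed_walk_def)
  have "successively (adj E) ((y # ys) @ [y])"
    using successively_infix[of "adj E" xs "y # ys @ [y]" zs] walk by simp
  then show "closed_walk E (y # ys)"
    unfolding closed_walk_def successively_append_iff by auto
  have yzs: "successively (adj E) (y # zs)"
    using successively_infix[of "adj E" "xs @ [y] @ ys" "y # zs" "[]"] walk by simp
  show "closed_walk E (y # zs @ xs)"
  proof (cases "xs = []")
    case True
    then show ?thesis
      using yzs close by (simp add: closed_walk_def)
  next
    case False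
    have "successively (adj E) (xs @ [y])"
      using successively_infix[of "adj E" "[]" "xs @ [y]" "ys @ [y] @ zs"] walk by simp
    then have "successively (adj E) xs" "adj E (last xs) y"
      using False by (simp_all add: successively_append_iff)
    moreover have "adj E (last (y # zs)) (hd xs)"
      using close False by simp
    ultimately have "successively (adj E) ((y # zs) @ xs)" "adj E (last xs) y"
      using yzs False by (simp_all only: successively_append_iff) simp
    then show ?thesis
      using False by (simp add: closed_walk_def)
  qed
qed

context sgraph
begin

lemma not_adj_self: "\<not> adj E u u"
  using simple by (auto simp: adj_def simple_graph_def)

lemma odd_closed_walk_has_cycle:
  assumes "closed_walk E ws" and "odd (length ws)"
  shows "has_cycle E"
  using assms
proof (induction "length ws" arbitrary: ws rule: less_induct)
  case less
  show ?case
  proof (cases "distinct ws")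
    case True
    have "length ws \<noteq> 1"
      using less.prems(1) not_adj_self by (auto simp: closed_walk_def length_Suc_conv)
    then have "length ws \<ge> 3"
      using less.prems(2) by presburger
    moreover have "\<forall>i < length ws - 1. adj E (ws ! i) (ws ! Suc i)"
      using less.prems(1) unfolding closed_walk_def by (auto intro: successively_nth)
    moreover have "adj E (last ws) (hd ws)"
      using less.prems(1) by (simp add: closed_walk_def)
    ultimately show ?thesis
      unfolding has_cycle_def using True by (intro exI[of _ ws]) simp
  next
    case False
    then obtain xs ys zs y where ws: "ws = xs @ [y] @ ys @ [y] @ zs"
      using not_distinct_decomp by blast
    have "closed_walk E (xs @ [y] @ ys @ [y] @ zs)"
      using less.prems(1) unfolding ws .
    then have "closed_walk E (y # ys)" "closed_walk E (y # zs @ xs)"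
      by (rule closed_walk_split)+
    moreover have "odd (length (y # ys)) \<or> odd (length (y # zs @ xs))"
      using less.prems(2) unfolding ws by simp presburger
    moreover have "length (y # ys) < length ws" "length (y # zs @ xs) < length ws"
      unfolding ws by simp_all
    ultimately show ?thesis
      using less.hyps by blast
  qed
qed

lemma odd_walk_pair_has_cycle:
  assumes "walk E r u p" and "walk E r v q"
    and "adj E u v" and parity: "odd (length p + length q - 1)"
  shows "has_cycle E"
proof (cases p)
  case (Cons r' p')
  have p: "p \<noteq> []" "hd p = r" "last p = u" "successively (adj E) p"
    and q: "q \<noteq> []" "hd q = r" "last q = v" "successively (adj E) q"
    using assms(1,2) unfolding walk_def by blast+
  \<comment> \<open>\<open>p'\<close> followed by the reverse of \<open>q\<close> closes up through the edge \<open>uv\<close> and the common start \<open>r\<close>\<close>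
  show ?thesis
  proof (cases "p' = []")
    case True
    then have "closed_walk E (rev q)"
      using p q \<open>adj E u v\<close> Cons successively_adj_rev[OF q(4)]
      by (simp add: closed_walk_def hd_rev last_rev adj_sym[of E r v] del: successively_rev)
    moreover have "odd (length (rev q))"
      using parity Cons True by simp
    ultimately show ?thesis
      by (rule odd_closed_walk_has_cycle)
  next
    case False
    have "closed_walk E (p' @ rev q)"
      unfolding closed_walk_def using p q \<open>adj E u v\<close> Cons False successively_adj_rev[OF q(4)]
      by (auto simp: successively_append_iff hd_rev last_rev successively_Cons simp del: successively_rev)
    moreover have "odd (length (p' @ rev q))"
      using parity Cons by simp
    ultimately show ?thesis
      by (rule odd_closed_walk_has_cycle)
  qed
qed (use assms(1) in \<open>simp add: walk_def\<close>)

lemma bipartite_if_no_cycle: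
  assumes conn: "connected_graph V E" and "\<not> has_cycle E"
  shows "bipartite V E"
proof -
  obtain r where r: "r \<in> V"
    using conn by (auto simp: connected_graph_def)
  have "\<exists>p. walk E r u p" if "u \<in> V" for u
  proof -
    have "(adj E)\<^sup>*\<^sup>* r u"
      using conn r that unfolding connected_graph_def by blast
    then show ?thesis
      by (rule walk_exists)
  qed
  then have chosen_walk: "walk E r u (SOME p. walk E r u p)" if "u \<in> V" for u
    using that by (meson someI_ex)
  define colour where "colour u \<longleftrightarrow> odd (length (SOME p. walk E r u p))" for u
  have "colour u \<noteq> colour v" if uv: "{u, v} \<in> E" for u v
  proof
    assume same: "colour u = colour v"
    define p where "p = (SOME p. walk E r u p)"
    define q where "q = (SOME p. walk E r v p)"
    have "u \<in> V" "v \<in> V"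
      using simple uv by (auto simp: simple_graph_def)
    then have p: "walk E r u p" and q: "walk E r v q"
      by (simp_all add: chosen_walk p_def q_def)
    have "adj E u v"
      using uv by (simp add: adj_def)
    moreover have "odd (length p + length q - 1)"
      using same p q unfolding colour_def p_def[symmetric] q_def[symmetric] walk_def
      by (cases p; cases q) auto
    ultimately have "has_cycle E"
      by (rule odd_walk_pair_has_cycle[OF p q])
    with assms(2) show False ..
  qed
  then show ?thesis
    unfolding bipartite_def by (intro exI[of _ colour]) blast
qed

lemma bipartite_if_alternating:
  assumes conn: "connected_graph V E" and nz: "\<exists>u\<in>V. k u \<noteq> (0::complex)"
    and alt: "\<forall>e\<in>arcs E. k (fst e) = - k (snd e)"
  shows "bipartite V E"
proof -
  obtain r where r: "r \<in> V" "k r \<noteq> 0"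
    using nz by blast
  have edge: "k u = - k v" if "{u, v} \<in> E" for u v
    using alt[rule_format, of "(u, v)"] that by (simp add: arcs_def)
  have reach: "k u = k r \<or> k u = - k r" if "u \<in> V" for u
  proof -
    have "(adj E)\<^sup>*\<^sup>* r u"
      using conn r(1) that unfolding connected_graph_def by blast
    then show ?thesis
    proof (induction rule: rtranclp_induct)
      case (step y z)
      then have "k y = - k z"
        by (simp add: adj_def edge)
      then have "k z = - k y"
        by simp
      then show ?case
        using step.IH by auto
    qed simp
  qed
  have "(k u = k r) \<noteq> (k v = k r)" if uv: "{u, v} \<in> E" for u v
  proof -
    have "u \<in> V"
      using simple uv by (auto simp: simple_graph_def)
    have "k v = - k u"
      using edge[OF uv] by simp
    moreover have "k r \<noteq> - k r"
      using r(2) by (simp add: eq_neg_iff_add_eq_0 flip: mult_2)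
    ultimately show ?thesis
      using reach[OF \<open>u \<in> V\<close>] by auto
  qed
  then show ?thesis
    unfolding bipartite_def by (intro exI[of _ "\<lambda>u. k u = k r"]) blast
qed

end

section \<open>The spectrum of \<open>U1\<close>\<close>

lemma op_spectrum_conj:
  assumes "\<And>f x. x \<in> S \<Longrightarrow> P f x = cnj (Q (\<lambda>y. cnj (f y)) x)"
  shows "\<mu> \<in> op_spectrum S P \<longleftrightarrow> cnj \<mu> \<in> op_spectrum S Q"
proof
  assume "\<mu> \<in> op_spectrum S P"
  then obtain f where "\<forall>x. x \<notin> S \<longrightarrow> f x = 0" "\<exists>x\<in>S. f x \<noteq> 0" "\<forall>x\<in>S. P f x = \<mu> * f x"
    unfolding op_spectrum_def by blast
  moreover have "Q (\<lambda>y. cnj (f y)) x = cnj (P f x)" if "x \<in> S" for x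
    using assms[OF that, of f] by simp
  ultimately show "cnj \<mu> \<in> op_spectrum S Q"
    unfolding op_spectrum_def by (intro CollectI exI[of _ "\<lambda>y. cnj (f y)"]) auto
next
  assume "cnj \<mu> \<in> op_spectrum S Q"
  then obtain g where "\<forall>x. x \<notin> S \<longrightarrow> g x = 0" "\<exists>x\<in>S. g x \<noteq> 0" "\<forall>x\<in>S. Q g x = cnj \<mu> * g x"
    unfolding op_spectrum_def by blast
  then show "\<mu> \<in> op_spectrum S P"
    unfolding op_spectrum_def using assms[of _ "\<lambda>y. cnj (g y)"]
    by (intro CollectI exI[of _ "\<lambda>y. cnj (g y)"]) auto
qed

context sgraph
begin

lemma T_op_form_real:
  "cnj (\<Sum>u\<in>V. cnj (f u) * T_op E w f u) = (\<Sum>u\<in>V. cnj (f u) * T_op E w f u)"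
proof -
  define c where "c e = w e * cnj (w (rev_arc e))" for e
  have "(\<Sum>u\<in>V. cnj (f u) * T_op E w f u) = (\<Sum>u\<in>V. \<Sum>e\<in>{e\<in>arcs E. fst e = u}. cnj (f (fst e)) * c e * f (snd e))"
    unfolding T_op_def sum_distrib_left c_def by (intro sum.cong refl) (auto simp: mult.assoc)
  also have "\<dots> = (\<Sum>e\<in>arcs E. cnj (f (fst e)) * c e * f (snd e))"
    using finite_vertices finite_arcs arc_vertices by (intro sum.group) auto
  finally have form: "(\<Sum>u\<in>V. cnj (f u) * T_op E w f u) = (\<Sum>e\<in>arcs E. cnj (f (fst e)) * c e * f (snd e))" .
  have "bij_betw rev_arc (arcs E) (arcs E)"
    by (rule bij_betw_byWitness[where f' = rev_arc]) (auto simp: rev_arc_in_arcs)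
  \<comment> \<open>conjugation turns \<open>c e\<close> into \<open>c (rev_arc e)\<close>, and reversing every arc restores the sum\<close>
  then have "(\<Sum>e\<in>arcs E. f (fst e) * c (rev_arc e) * cnj (f (snd e))) =
      (\<Sum>e\<in>arcs E. f (snd e) * c e * cnj (f (fst e)))"
    using sum.reindex_bij_betw[of rev_arc "arcs E" "arcs E" "\<lambda>e. f (snd e) * c e * cnj (f (fst e))"]
    by simp
  then show ?thesis
    unfolding form by (simp add: cnj_sum c_def mult_ac)
qed

lemma T_op_eigenvalue_real:
  assumes "\<mu> \<in> op_spectrum V (T_op E w)"
  shows "cnj \<mu> = \<mu>"
proof -
  obtain f where f: "\<exists>x\<in>V. f x \<noteq> 0" "\<forall>x\<in>V. T_op E w f x = \<mu> * f x"
    using assms unfolding op_spectrum_def by blast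
  define S where "S = (\<Sum>u\<in>V. (cmod (f u))\<^sup>2)"
  obtain u0 where "u0 \<in> V" "f u0 \<noteq> 0"
    using f(1) by blast
  then have "0 < (cmod (f u0))\<^sup>2" "(cmod (f u0))\<^sup>2 \<le> S"
    unfolding S_def using finite_vertices by (auto intro: member_le_sum)
  then have "S > 0"
    by linarith
  have "(\<Sum>u\<in>V. cnj (f u) * T_op E w f u) = \<mu> * of_real S"
    unfolding S_def of_real_sum complex_norm_square sum_distrib_left using f(2)
    by (intro sum.cong refl) (simp add: mult_ac)
  then have "cnj \<mu> * of_real S = \<mu> * of_real S"
    using T_op_form_real[of f w] by simp
  then show ?thesis
    using \<open>S > 0\<close> by simp
qed

lemma T_op_eigenvalue_if_dual_birth_vector:
  assumes "dual_birth_vector V E (\<lambda>e. cnj (w e)) l h"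
    and norm: "\<forall>u\<in>V. (\<Sum>e\<in>{e\<in>arcs E. fst e = u}. (cmod (w e))\<^sup>2) = 1"
  shows "l \<in> op_spectrum V (T_op E w)"
proof -
  have rel: "h (snd e) * cnj (w (rev_arc e)) = l * h (fst e) * cnj (w e)" if "e \<in> arcs E" for e
    using assms(1) rev_arc_in_arcs[OF that] unfolding dual_birth_vector_def by force
  define h' where "h' u = (if u \<in> V then h u else 0)" for u
  have "T_op E w h' u = l * h' u" if u: "u \<in> V" for u
  proof -
    have "T_op E w h' u = l * h u * (\<Sum>e\<in>{e\<in>arcs E. fst e = u}. of_real ((cmod (w e))\<^sup>2))"
      unfolding T_op_def sum_distrib_left
    proof (intro sum.cong refl)
      fix e assume e: "e \<in> {e\<in>arcs E. fst e = u}"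
      then have "h' (snd e) = h (snd e)"
        using arc_vertices[of e] by (simp add: h'_def)
      then have "w e * cnj (w (rev_arc e)) * h' (snd e) = w e * (h (snd e) * cnj (w (rev_arc e)))"
        by (simp add: mult_ac)
      also have "\<dots> = l * h u * (w e * cnj (w e))"
        using rel[of e] e by (simp add: mult_ac)
      finally show "w e * cnj (w (rev_arc e)) * h' (snd e) = l * h u * of_real ((cmod (w e))\<^sup>2)"
        by (simp only: complex_norm_square)
    qed
    also have "(\<Sum>e\<in>{e\<in>arcs E. fst e = u}. of_real ((cmod (w e))\<^sup>2)) = (1 :: complex)"
      using norm u by (simp only: flip: of_real_sum) simp
    moreover have "h' u = h u"
      using u by (simp add: h'_def)
    ultimately show ?thesis
      by simp
  qed
  then show ?thesis
    unfolding op_spectrum_def using assms(1) unfolding dual_birth_vector_def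
    by (intro CollectI exI[of _ h']) (auto simp: h'_def)
qed

lemma arc_system_U1:
  assumes norm: "\<forall>u\<in>V. (\<Sum>e\<in>{e\<in>arcs E. fst e = u}. (cmod (w e))\<^sup>2) = 1"
  shows "arc_system (arcs E) V w (\<lambda>e. cnj (w e))"
proof (rule arc_system_arcs)
  fix u assume "u \<in> V"
  have "(\<Sum>g\<in>{g\<in>arcs E. fst g = u}. cnj (w g) * w g) =
      of_real (\<Sum>g\<in>{g\<in>arcs E. fst g = u}. (cmod (w g))\<^sup>2)"
    unfolding of_real_sum complex_norm_square by (simp add: mult.commute)
  then show "(\<Sum>g\<in>{g\<in>arcs E. fst g = u}. cnj (w g) * w g) = 1"
    using norm \<open>u \<in> V\<close> by simp
qed

lemma vertex_op_conj_spectrum: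
  "op_spectrum V (vertex_op (arcs E) w (\<lambda>e. cnj (w e))) = op_spectrum V (T_op E w)"
proof (rule Set.set_eqI)
  fix \<mu>
  have "\<mu> \<in> op_spectrum V (vertex_op (arcs E) w (\<lambda>e. cnj (w e))) \<longleftrightarrow> cnj \<mu> \<in> op_spectrum V (T_op E w)"
    by (rule op_spectrum_conj) (simp add: vertex_op_def T_op_def cnj_sum mult_ac)
  then show "\<mu> \<in> op_spectrum V (vertex_op (arcs E) w (\<lambda>e. cnj (w e))) \<longleftrightarrow> \<mu> \<in> op_spectrum V (T_op E w)"
    using T_op_eigenvalue_real[of "cnj \<mu>" w] T_op_eigenvalue_real[of \<mu> w] by auto
qed

lemma U1_birth_eigenvector_iff:
  assumes norm: "\<forall>u\<in>V. (\<Sum>e\<in>{e\<in>arcs E. fst e = u}. (cmod (w e))\<^sup>2) = 1"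
    and l: "l \<notin> op_spectrum V (T_op E w)"
  shows "(\<exists>\<psi>. birth_eigenvector (arcs E) V (\<lambda>e. cnj (w e)) l \<psi>) \<longleftrightarrow> (l = 1 \<or> l = -1) \<and> card V < card E"
proof
  assume "\<exists>\<psi>. birth_eigenvector (arcs E) V (\<lambda>e. cnj (w e)) l \<psi>"
  then obtain \<psi> where \<psi>: "birth_eigenvector (arcs E) V (\<lambda>e. cnj (w e)) l \<psi>" ..
  then have pm: "l = 1 \<or> l = -1"
    by (rule arc_system.birth_eigenvalue[OF arc_system_U1[OF norm]])
  moreover have "\<not> card E \<le> card V"
  proof
    assume "card E \<le> card V"
    moreover have "l * l = 1"
      using pm by auto
    ultimately obtain h where "dual_birth_vector V E (\<lambda>e. cnj (w e)) l h"
      using dual_birth_vector_of_birth_eigenvector[OF _ _ \<psi>] by blast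
    then show False
      using T_op_eigenvalue_if_dual_birth_vector[OF _ norm] l by blast
  qed
  ultimately show "(l = 1 \<or> l = -1) \<and> card V < card E"
    by simp
next
  assume "(l = 1 \<or> l = -1) \<and> card V < card E"
  then show "\<exists>\<psi>. birth_eigenvector (arcs E) V (\<lambda>e. cnj (w e)) l \<psi>"
    using birth_eigenvector_exists by auto
qed

theorem U1_spectrum:
  assumes norm: "\<forall>u\<in>V. (\<Sum>e\<in>{e\<in>arcs E. fst e = u}. (cmod (w e))\<^sup>2) = 1"
  shows "op_spectrum (arcs E) (U1 E w) =
    preim phi1 (op_spectrum V (T_op E w)) \<union> {l. (l = 1 \<or> l = -1) \<and> card V < card E}"
proof -
  interpret arc_system "arcs E" V w "\<lambda>e. cnj (w e)"
    using norm by (rule arc_system_U1)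
  have U: "U1 E w = walk_op (arcs E) w (\<lambda>e. cnj (w e))"
    by (simp add: fun_eq_iff U1_def walk_op_def)
  have "l \<in> preim phi1 (op_spectrum V (T_op E w))"
    if "l \<in> op_spectrum V (T_op E w)" "l = 1 \<or> l = -1" for l
    using that by (auto simp: preim_def phi1_def)
  then show ?thesis
    unfolding U walk_op_spectrum vertex_op_conj_spectrum
    using U1_birth_eigenvector_iff[OF norm] birth_eigenvalue by blast
qed

end

section \<open>The spectrum of \<open>U2\<close>\<close>

locale stochastic_walk = sgraph +
  fixes w :: "'a \<times> 'a \<Rightarrow> real"
  assumes connected: "connected_graph V E"
    and weight_pos: "e \<in> arcs E \<Longrightarrow> w e > 0"
    and stochastic: "u \<in> V \<Longrightarrow> (\<Sum>e\<in>{e\<in>arcs E. fst e = u}. w e) = 1"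
begin

lemma arc_system_U2: "arc_system (arcs E) V (\<lambda>_. 1) (\<lambda>e. of_real (w e))"
  by (rule arc_system_arcs) (simp add: stochastic flip: of_real_sum)

lemma U2_eq_walk_op: "U2 E w = walk_op (arcs E) (\<lambda>_. 1) (\<lambda>e. of_real (w e))"
  by (simp add: fun_eq_iff U2_def walk_op_def)

lemma preim_phi2_L_op:
  "preim phi2 (op_spectrum V (L_op E w)) =
    preim phi1 (op_spectrum V (vertex_op (arcs E) (\<lambda>_. 1) (\<lambda>e. of_real (w e))))"
proof -
  have "vertex_op (arcs E) (\<lambda>_. 1) (\<lambda>e. of_real (w e)) f u = c * f u \<longleftrightarrow> L_op E w f u = (c - 1) * f u"
    for f u c
    by (auto simp: vertex_op_def L_op_def algebra_simps)
  then have "c \<in> op_spectrum V (vertex_op (arcs E) (\<lambda>_. 1) (\<lambda>e. of_real (w e))) \<longleftrightarrow>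
      c - 1 \<in> op_spectrum V (L_op E w)" for c
    unfolding op_spectrum_def by simp
  then show ?thesis
    unfolding preim_def phi1_def phi2_def by simp
qed

lemma one_in_preim_phi2_L_op: "1 \<in> preim phi2 (op_spectrum V (L_op E w))"
proof -
  define f where "f u = (if u \<in> V then 1 else (0::complex))" for u
  have "L_op E w f u = 0" if u: "u \<in> V" for u
  proof -
    have "(\<Sum>e\<in>{e\<in>arcs E. fst e = u}. of_real (w e) * f (snd e)) =
        of_real (\<Sum>e\<in>{e\<in>arcs E. fst e = u}. w e)"
      unfolding of_real_sum using arc_vertices by (intro sum.cong refl) (auto simp: f_def)
    then show ?thesis
      using stochastic[OF u] u by (simp add: L_op_def f_def)
  qed
  then have "0 \<in> op_spectrum V (L_op E w)"
    unfolding op_spectrum_def using connected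
    by (intro CollectI exI[of _ f]) (auto simp: f_def connected_graph_def)
  then show ?thesis
    by (simp add: preim_def phi2_def)
qed

lemma neg_one_in_preim_phi2_L_op:
  assumes "bipartite V E"
  shows "-1 \<in> preim phi2 (op_spectrum V (L_op E w))"
proof -
  obtain c :: "'a \<Rightarrow> bool" where c: "\<forall>u v. {u, v} \<in> E \<longrightarrow> c u \<noteq> c v"
    using assms unfolding bipartite_def by blast
  define f where "f u = (if u \<in> V then (if c u then 1 else -1) else (0::complex))" for u
  have "L_op E w f u = -2 * f u" if u: "u \<in> V" for u
  proof -
    have "f (snd e) = - f u" if "e \<in> {e\<in>arcs E. fst e = u}" for e
      using that c arc_vertices[of e] u by (auto simp: f_def arcs_def)
    then have "(\<Sum>e\<in>{e\<in>arcs E. fst e = u}. of_real (w e) * f (snd e)) =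
        of_real (\<Sum>e\<in>{e\<in>arcs E. fst e = u}. w e) * - f u"
      unfolding of_real_sum sum_distrib_right by (intro sum.cong refl) auto
    then show ?thesis
      using stochastic[OF u] by (simp add: L_op_def)
  qed
  then have "-2 \<in> op_spectrum V (L_op E w)"
    unfolding op_spectrum_def using connected
    by (intro CollectI exI[of _ f]) (auto simp: f_def connected_graph_def)
  then show ?thesis
    by (simp add: preim_def phi2_def)
qed

end

locale reversible_walk = stochastic_walk +
  fixes m :: "'a \<Rightarrow> real"
  assumes measure_pos: "u \<in> V \<Longrightarrow> m u > 0"
    and reversible: "e \<in> arcs E \<Longrightarrow> m (fst e) * w e = m (snd e) * w (rev_arc e)"
begin

lemma bipartite_if_dual_birth_vector:
  assumes h: "dual_birth_vector V E (\<lambda>e. of_real (w e)) (-1) h"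
  shows "bipartite V E"
proof -
  \<comment> \<open>reversibility turns the relation satisfied by \<open>h\<close> into the alternation of \<open>h / m\<close>\<close>
  define k where "k u = h u / of_real (m u)" for u
  have "k (fst e) = - k (snd e)" if e: "e \<in> arcs E" for e
  proof -
    have pos: "m (fst e) > 0" "m (snd e) > 0" "w e > 0"
      using measure_pos arc_vertices[OF e] weight_pos[OF e] by auto
    have rel: "h (fst e) * of_real (w e) = - h (snd e) * of_real (w (rev_arc e))"
      using h e unfolding dual_birth_vector_def by simp
    have rev: "of_real (m (snd e)) * of_real (w (rev_arc e)) = (of_real (m (fst e) * w e) :: complex)"
      using reversible[OF e] by (simp flip: of_real_mult)
    have "of_real (w e) * (h (fst e) * of_real (m (snd e))) =
        (h (fst e) * of_real (w e)) * of_real (m (snd e))"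
      by (simp add: mult_ac)
    also have "\<dots> = - h (snd e) * (of_real (m (snd e)) * of_real (w (rev_arc e)))"
      unfolding rel by (simp add: mult_ac)
    also have "\<dots> = of_real (w e) * (- h (snd e) * of_real (m (fst e)))"
      unfolding rev by (simp add: mult_ac)
    finally have "of_real (w e) * (h (fst e) * of_real (m (snd e))) =
        of_real (w e) * (- h (snd e) * of_real (m (fst e)))" .
    moreover have "of_real (w e) \<noteq> (0 :: complex)"
      using pos(3) by simp
    ultimately have "h (fst e) * of_real (m (snd e)) = - h (snd e) * of_real (m (fst e))"
      using mult_left_cancel by blast
    then show ?thesis
      using pos by (simp add: k_def field_simps)
  qed
  moreover obtain u where "u \<in> V" "h u \<noteq> 0"
    using h unfolding dual_birth_vector_def by blast
  then have "\<exists>u\<in>V. k u \<noteq> 0"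
    using measure_pos[of u] by (intro bexI[of _ u]) (auto simp: k_def)
  ultimately show ?thesis
    using bipartite_if_alternating connected by blast
qed

lemma bipartite_if_fewer_edges:
  assumes "card E < card V"
  shows "bipartite V E"
  using dual_birth_vector_exists[OF assms, of "-1"] bipartite_if_dual_birth_vector by auto

theorem U2_spectrum:
  "op_spectrum (arcs E) (U2 E w) =
    preim phi2 (op_spectrum V (L_op E w)) \<union> {l. l = -1 \<and> card V < card E}"
proof -
  let ?b = "\<lambda>e. complex_of_real (w e)"
  interpret arc_system "arcs E" V "\<lambda>_. 1" ?b
    by (rule arc_system_U2)
  have birth: "l \<in> preim phi2 (op_spectrum V (L_op E w)) \<or> l = -1 \<and> card V < card E"
    if \<psi>: "birth_eigenvector (arcs E) V ?b l \<psi>" for l \<psi>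
  proof (cases "card V < card E")
    case False
    have "l * l = 1"
      using birth_eigenvalue[OF \<psi>] by auto
    moreover have "card E \<le> card V"
      using False by simp
    ultimately obtain h where "dual_birth_vector V E ?b l h"
      using dual_birth_vector_of_birth_eigenvector[OF _ _ \<psi>] by blast
    then have "l = -1 \<longrightarrow> bipartite V E"
      using bipartite_if_dual_birth_vector by blast
    then show ?thesis
      using birth_eigenvalue[OF \<psi>] one_in_preim_phi2_L_op neg_one_in_preim_phi2_L_op by blast
  qed (use birth_eigenvalue[OF \<psi>] one_in_preim_phi2_L_op in auto)
  then have "{l. \<exists>\<psi>. birth_eigenvector (arcs E) V ?b l \<psi>} \<subseteq>
      preim phi2 (op_spectrum V (L_op E w)) \<union> {l. l = -1 \<and> card V < card E}"
    by blast
  moreover have "{l. l = -1 \<and> card V < card E} \<subseteq> {l. \<exists>\<psi>. birth_eigenvector (arcs E) V ?b l \<psi>}"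
    using birth_eigenvector_exists[of "-1" ?b] by auto
  ultimately show ?thesis
    unfolding U2_eq_walk_op walk_op_spectrum preim_phi2_L_op[symmetric] by blast
qed

lemma U2_spectrum_by_graph_type:
  "op_spectrum (arcs E) (U2 E w) =
    (if is_tree V E then preim phi2 (op_spectrum V (L_op E w))
     else if card E = card V \<and> \<not> bipartite V E then preim phi2 (op_spectrum V (L_op E w)) \<union> {1}
     else preim phi2 (op_spectrum V (L_op E w)) \<union> {1, -1})"
proof -
  have "bipartite V E" if "is_tree V E"
    using that bipartite_if_no_cycle connected unfolding is_tree_def by blast
  then show ?thesis
    unfolding U2_spectrum
    using one_in_preim_phi2_L_op neg_one_in_preim_phi2_L_op bipartite_if_fewer_edges
    by (auto simp: linorder_neq_iff)
qed

end

theorem proposition3: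
  fixes V :: "'a set" and E :: "'a set set"
  assumes "simple_graph V E" and "connected_graph V E"
  shows
   "(\<forall>w1 :: 'a \<times> 'a \<Rightarrow> complex.
      (\<forall>u\<in>V. (\<Sum>e\<in>{e\<in>arcs E. fst e = u}. (cmod (w1 e))\<^sup>2) = 1) \<longrightarrow>
      (let n = (\<lambda>s::complex. int (card E) - int (card V) + (if s \<in> op_spectrum V (T_op E w1) then 1 else 0))
       in op_spectrum (arcs E) (U1 E w1) =
            preim phi1 (op_spectrum V (T_op E w1))
            \<union> {x. x = 1 \<and> n 1 > 0} \<union> {x. x = -1 \<and> n (-1) > 0}))
    \<and>
    (\<forall>w2 :: 'a \<times> 'a \<Rightarrow> real.
      (\<forall>e\<in>arcs E. w2 e > 0) \<longrightarrow>
      (\<forall>u\<in>V. (\<Sum>e\<in>{e\<in>arcs E. fst e = u}. w2 e) = 1) \<longrightarrow>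
      (\<exists>mV :: 'a \<Rightarrow> real. (\<forall>u\<in>V. mV u > 0) \<and>
          (\<forall>e\<in>arcs E. mV (fst e) * w2 e = mV (snd e) * w2 (rev_arc e))) \<longrightarrow>
      op_spectrum (arcs E) (U2 E w2) =
        (if is_tree V E then preim phi2 (op_spectrum V (L_op E w2))
         else if card E = card V \<and> \<not> bipartite V E
           then preim phi2 (op_spectrum V (L_op E w2)) \<union> {1}
         else preim phi2 (op_spectrum V (L_op E w2)) \<union> {1, -1}))"
proof -
  interpret sgraph V E
    using assms(1) by unfold_locales
  show ?thesis
  proof (intro conjI allI impI)
    fix w1 :: "'a \<times> 'a \<Rightarrow> complex"
    assume norm: "\<forall>u\<in>V. (\<Sum>e\<in>{e\<in>arcs E. fst e = u}. (cmod (w1 e))\<^sup>2) = 1"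
    have "l \<in> preim phi1 (op_spectrum V (T_op E w1))"
      if "l \<in> op_spectrum V (T_op E w1)" and "l = 1 \<or> l = -1" for l
      using that by (auto simp: preim_def phi1_def)
    then show "let n = (\<lambda>s. int (card E) - int (card V) + (if s \<in> op_spectrum V (T_op E w1) then 1 else 0))
      in op_spectrum (arcs E) (U1 E w1) =
        preim phi1 (op_spectrum V (T_op E w1)) \<union> {x. x = 1 \<and> n 1 > 0} \<union> {x. x = -1 \<and> n (-1) > 0}"
      unfolding U1_spectrum[OF norm] Let_def by auto
  next
    fix w2 :: "'a \<times> 'a \<Rightarrow> real"
    assume pos: "\<forall>e\<in>arcs E. w2 e > 0" and sum: "\<forall>u\<in>V. (\<Sum>e\<in>{e\<in>arcs E. fst e = u}. w2 e) = 1"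
      and "\<exists>mV. (\<forall>u\<in>V. mV u > 0) \<and> (\<forall>e\<in>arcs E. mV (fst e) * w2 e = mV (snd e) * w2 (rev_arc e))"
    then obtain m where m: "\<forall>u\<in>V. m u > 0" "\<forall>e\<in>arcs E. m (fst e) * w2 e = m (snd e) * w2 (rev_arc e)"
      by blast
    have "reversible_walk V E w2 m"
      by unfold_locales (use assms pos sum m in auto)
    then show "op_spectrum (arcs E) (U2 E w2) =
        (if is_tree V E then preim phi2 (op_spectrum V (L_op E w2))
         else if card E = card V \<and> \<not> bipartite V E
           then preim phi2 (op_spectrum V (L_op E w2)) \<union> {1}
         else preim phi2 (op_spectrum V (L_op E w2)) \<union> {1, -1})"
      by (rule reversible_walk.U2_spectrum_by_graph_type)
  qed
qed

end
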